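(* Let $G$ be a finite abelian group, let $S\subseteq G$ be spectral, and let $H\le G$ be a subgroup such that $S$ determines every direction in $H$, i.e. for every nonzero $h\in H$ there is $w\in S-S$ with $w\sim h$. Then $|H|$ divides $|S|$.
   Context: For a finite abelian group $G=\bigoplus_i\mathbb{Z}_{n_i}$ with exponent $M$, let $\langle x,y\rangle=\sum_i\frac{M}{n_i}x_iy_i\in\mathbb{Z}_M$ and $\chi_g(x)=e^{2\pi i\langle x,g\rangle/M}$ for $g\in G$; $g\mapsto\chi_g$ identifies $G$ with its dual group. For a set $S$, $\chi(S)=\sum_{s\in S}\chi(s)$. A set $S\subseteq G$ is spectral if there is $\Lambda\subseteq G$ with $|\Lambda|=|S|$ and $\chi_{\lambda-\lambda'}(S)=0$ for all distinct $\lambda,\lambda'\in\Lambda$. For $v,w\in G$ write $v\sim w$ if $v$ and $w$ generate the same cyclic subgroup of $G$; the equivalence classes are called directions, and $S$ determines the direction of $v$ if some $w\in S-S$ satisfies $w\sim v$. *)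

theory Defs
  imports Complex_Main
begin

text \<open>A finite abelian group G = Z_{n_0} (+) ... (+) Z_{n_{k-1}} is given by the list
  ns = [n_0,...,n_{k-1}] of moduli (each n_i >= 1); elements are integer lists x of
  length k with 0 <= x_i < n_i; addition is coordinatewise modulo n_i.\<close>

definition grp :: "nat list \<Rightarrow> int list set" where
  "grp ns = {x. length x = length ns \<and> (\<forall>i<length ns. 0 \<le> x!i \<and> x!i < int (ns!i))}"

definition gzero :: "nat list \<Rightarrow> int list" where
  "gzero ns = replicate (length ns) 0"

definition gadd :: "nat list \<Rightarrow> int list \<Rightarrow> int list \<Rightarrow> int list" where
  "gadd ns x y = map (\<lambda>i. (x!i + y!i) mod int (ns!i)) [0..<length ns]"

definition gneg :: "nat list \<Rightarrow> int list \<Rightarrow> int list" where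
  "gneg ns x = map (\<lambda>i. (- x!i) mod int (ns!i)) [0..<length ns]"

definition gsub :: "nat list \<Rightarrow> int list \<Rightarrow> int list \<Rightarrow> int list" where
  "gsub ns x y = map (\<lambda>i. (x!i - y!i) mod int (ns!i)) [0..<length ns]"

definition gsmul :: "nat list \<Rightarrow> int \<Rightarrow> int list \<Rightarrow> int list" where
  "gsmul ns k x = map (\<lambda>i. (k * x!i) mod int (ns!i)) [0..<length ns]"

definition expo :: "nat list \<Rightarrow> nat" where
  "expo ns = Lcm (set ns)"

definition pairing :: "nat list \<Rightarrow> int list \<Rightarrow> int list \<Rightarrow> int" where
  "pairing ns x y = (\<Sum>i<length ns. int (expo ns div ns!i) * x!i * y!i) mod int (expo ns)"

definition chi :: "nat list \<Rightarrow> int list \<Rightarrow> int list \<Rightarrow> complex" where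
  "chi ns g x = exp (2 * pi * \<i> * of_int (pairing ns x g) / of_nat (expo ns))"

definition chi_set :: "nat list \<Rightarrow> int list \<Rightarrow> int list set \<Rightarrow> complex" where
  "chi_set ns g S = (\<Sum>s\<in>S. chi ns g s)"

definition spectral :: "nat list \<Rightarrow> int list set \<Rightarrow> bool" where
  "spectral ns S \<longleftrightarrow> (\<exists>\<Lambda>. \<Lambda> \<subseteq> grp ns \<and> card \<Lambda> = card S \<and>
     (\<forall>l\<in>\<Lambda>. \<forall>l'\<in>\<Lambda>. l \<noteq> l' \<longrightarrow> chi_set ns (gsub ns l l') S = 0))"

definition cyc :: "nat list \<Rightarrow> int list \<Rightarrow> int list set" where
  "cyc ns v = {gsmul ns k v | k. True}"

definition dir_equiv :: "nat list \<Rightarrow> int list \<Rightarrow> int list \<Rightarrow> bool" where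
  "dir_equiv ns v w \<longleftrightarrow> cyc ns v = cyc ns w"

definition diffset :: "nat list \<Rightarrow> int list set \<Rightarrow> int list set" where
  "diffset ns S = {gsub ns a b | a b. a \<in> S \<and> b \<in> S}"

definition is_subgroup :: "nat list \<Rightarrow> int list set \<Rightarrow> bool" where
  "is_subgroup ns H \<longleftrightarrow> H \<subseteq> grp ns \<and> gzero ns \<in> H \<and>
     (\<forall>x\<in>H. \<forall>y\<in>H. gadd ns x y \<in> H) \<and> (\<forall>x\<in>H. gneg ns x \<in> H)"

end

(* Let L be a spectrum of S. The square matrix (chi_l(s)) for l in L, s in S has unimodular
   entries and orthogonal rows, hence orthogonal columns: the Fourier transform
   w |-> sum_{l in L} chi_w(l) of L vanishes on (S - S) - {0}. A vanishing sum of M-th roots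
   of unity stays zero when every root z is replaced by z^k with k a unit modulo the orders
   involved (irreducibility of cyclotomic polynomials), so this zero set is a union of
   directions and contains H - {0}. Summing the transform over H and using the orthogonality
   of the characters of H gives |L| = |H| * |{l in L. chi_h(l) = 1 for all h in H}|. *)

theory Submission
  imports Defs "HOL-Computational_Algebra.Polynomial_Factorial" "HOL-Computational_Algebra.Primes"
begin

section \<open>Integer polynomials and the Frobenius congruence\<close>

definition ipoly :: "int poly \<Rightarrow> 'a::comm_ring_1 \<Rightarrow> 'a" where
  "ipoly p x = poly (map_poly of_int p) x"

lemma map_poly_of_int_add: "map_poly of_int (p + q) = map_poly of_int p + map_poly of_int q"
  by (rule poly_eqI) (simp add: coeff_map_poly)

lemma map_poly_of_int_diff: "map_poly of_int (p - q) = map_poly of_int p - map_poly of_int q"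
  by (rule poly_eqI) (simp add: coeff_map_poly)

lemma map_poly_of_int_mult: "map_poly of_int (p * q) = map_poly of_int p * map_poly of_int q"
  by (rule poly_eqI) (simp add: coeff_map_poly coeff_mult)

lemma ipoly_add [simp]: "ipoly (p + q) x = ipoly p x + ipoly q x"
  by (simp add: ipoly_def map_poly_of_int_add)

lemma ipoly_diff [simp]: "ipoly (p - q) x = ipoly p x - ipoly q x"
  by (simp add: ipoly_def map_poly_of_int_diff)

lemma ipoly_mult [simp]: "ipoly (p * q) x = ipoly p x * ipoly q x"
  by (simp add: ipoly_def map_poly_of_int_mult)

lemma ipoly_0 [simp]: "ipoly 0 x = 0"
  by (simp add: ipoly_def)

lemma ipoly_1 [simp]: "ipoly 1 x = 1"
  by (simp add: ipoly_def)

lemma ipoly_power [simp]: "ipoly (p ^ n) x = ipoly p x ^ n"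
  by (induction n) simp_all

lemma ipoly_pCons [simp]: "ipoly (pCons c p) x = of_int c + x * ipoly p x"
  by (simp add: ipoly_def map_poly_pCons)

lemma ipoly_monom [simp]: "ipoly (monom c n) x = of_int c * x ^ n"
  by (simp add: ipoly_def map_poly_monom poly_monom)

lemma ipoly_smult [simp]: "ipoly (smult c p) x = of_int c * ipoly p x"
  by (simp add: ipoly_def map_poly_smult)

lemma ipoly_of_nat [simp]: "ipoly (of_nat n) x = of_nat n"
  by (simp add: of_nat_poly)

lemma ipoly_sum [simp]: "ipoly (sum f A) x = (\<Sum>a\<in>A. ipoly (f a) x)"
  by (induction A rule: infinite_finite_induct) simp_all

lemma ipoly_pcompose: "ipoly (pcompose p q) x = ipoly p (ipoly q x)"
  by (induction p) (simp_all add: pcompose_pCons)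

lemma freshmans_dream_dvd:
  fixes x y :: "'a::comm_ring_1"
  assumes "prime p"
  shows "of_nat p dvd (x + y) ^ p - (x ^ p + y ^ p)"
proof -
  have p: "p > 1" using assms prime_gt_1_nat by blast
  have "{..p} = insert 0 (insert p {1..p-1})" using p by auto
  then have "(x + y) ^ p = y ^ p + x ^ p + (\<Sum>k\<in>{1..p-1}. of_nat (p choose k) * x ^ k * y ^ (p - k))"
    using p by (simp add: binomial_ring)
  moreover have "of_nat p dvd (\<Sum>k\<in>{1..p-1}. of_nat (p choose k) * x ^ k * y ^ (p - k))"
  proof (intro dvd_sum dvd_mult2)
    fix k assume "k \<in> {1..p-1}"
    then have "p dvd p choose k" using assms by (intro dvd_choose_prime) auto
    then show "of_nat p dvd (of_nat (p choose k) :: 'a)" by (metis dvd_def of_nat_mult)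
  qed
  ultimately show ?thesis by (simp add: algebra_simps)
qed

lemma fermat_dvd_power_diff:
  fixes a :: int
  assumes "prime p"
  shows "int p dvd a ^ p - a"
proof (induction a rule: int_induct[where k = 0])
  case base
  then show ?case using assms prime_gt_0_nat by (simp add: power_0_left)
next
  case (step1 a)
  have "int p dvd ((a + 1) ^ p - (a ^ p + 1)) + (a ^ p - a)"
    using freshmans_dream_dvd[OF assms, of a 1] by (intro dvd_add[OF _ step1.IH]) simp
  also have "\<dots> = (a + 1) ^ p - (a + 1)" by simp
  finally show ?case .
next
  case (step2 a)
  have "int p dvd (a ^ p - a) - (a ^ p - ((a - 1) ^ p + 1))"
    using freshmans_dream_dvd[OF assms, of "a - 1" 1] by (intro dvd_diff[OF step2.IH]) simp
  also have "\<dots> = (a - 1) ^ p - (a - 1)" by simp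
  finally show ?case .
qed

lemma frobenius_int_poly_dvd:
  fixes g :: "int poly"
  assumes "prime p"
  shows "of_nat p dvd g ^ p - pcompose g ([:0, 1:] ^ p)"
proof (induction g)
  case 0
  then show ?case using assms prime_gt_0_nat by (simp add: power_0_left)
next
  case (pCons a g)
  define X :: "int poly" where "X = [:0, 1:]"
  have "of_nat p dvd ([:a:] + X * g) ^ p - ([:a:] ^ p + (X * g) ^ p)"
    by (rule freshmans_dream_dvd[OF assms])
  moreover have "of_nat p dvd [:a:] ^ p - [:a:]"
  proof -
    obtain t where "a ^ p - a = int p * t" using fermat_dvd_power_diff[OF assms] by blast
    then have "[:a:] ^ p - [:a:] = of_nat p * [:t:]" by (simp add: poly_const_pow of_nat_poly)
    then show ?thesis by (metis dvd_triv_left)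
  qed
  moreover have "of_nat p dvd X ^ p * (g ^ p - pcompose g (X ^ p))"
    using pCons.IH unfolding X_def by simp
  ultimately have "of_nat p dvd (([:a:] + X * g) ^ p - ([:a:] ^ p + (X * g) ^ p))
      + ([:a:] ^ p - [:a:]) + X ^ p * (g ^ p - pcompose g (X ^ p))"
    by (intro dvd_add)
  also have "\<dots> = ([:a:] + X * g) ^ p - ([:a:] + X ^ p * pcompose g (X ^ p))"
    by (simp add: power_mult_distrib algebra_simps)
  also have "[:a:] + X * g = pCons a g"
    by (simp add: X_def)
  also have "[:a:] + X ^ p * pcompose g (X ^ p) = pcompose (pCons a g) (X ^ p)"
    by (simp add: pcompose_pCons)
  finally show ?case unfolding X_def .
qed

lemma ipoly_pderiv_mult_at_root:
  assumes "ipoly f x = 0"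
  shows "ipoly (pderiv (f * g)) x = ipoly (pderiv f) x * ipoly g x"
  using assms by (simp add: pderiv_mult)

definition is_int_minpoly :: "'a::comm_ring_1 \<Rightarrow> int poly \<Rightarrow> bool" where
  "is_int_minpoly x m \<longleftrightarrow> m \<noteq> 0 \<and> ipoly m x = 0 \<and> (\<forall>q. ipoly q x = 0 \<longrightarrow> m dvd q)"

lemma int_minpoly_root: "is_int_minpoly x m \<Longrightarrow> ipoly m x = 0"
  by (simp add: is_int_minpoly_def)

lemma int_minpoly_dvd: "is_int_minpoly x m \<Longrightarrow> ipoly q x = 0 \<Longrightarrow> m dvd q"
  by (simp add: is_int_minpoly_def)

lemma int_minpoly_exists:
  fixes x :: "'a::{idom, ring_char_0}"
  assumes "P \<noteq> 0" "ipoly P x = 0"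
  obtains m where "is_int_minpoly x m"
proof -
  obtain f where f: "f \<noteq> 0" "ipoly f x = 0"
    and f_least: "\<And>q. q \<noteq> 0 \<Longrightarrow> ipoly q x = 0 \<Longrightarrow> degree f \<le> degree q"
    using ex_has_least_nat[of "\<lambda>q. q \<noteq> 0 \<and> ipoly q x = 0" P degree] assms by blast
  define m where "m = primitive_part f"
  have m0: "m \<noteq> 0" and content_m: "content m = 1" and deg_m: "degree m = degree f"
    using f by (simp_all add: m_def)
  have "of_int (content f) * ipoly m x = 0"
    using f by (metis content_times_primitive_part ipoly_smult m_def)
  then have root_m: "ipoly m x = 0" using f by simp
  have "m dvd q" if q: "ipoly q x = 0" for q
  proof -
    obtain s r where sr: "pseudo_divmod q m = (s, r)" by (cases "pseudo_divmod q m")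
    define c where "c = lead_coeff m ^ (Suc (degree q) - degree m)"
    have eq: "smult c q = m * s + r" and r: "r = 0 \<or> degree r < degree m"
      using pseudo_divmod[OF m0 sr] by (simp_all add: c_def)
    have "ipoly r x = 0"
      using arg_cong[OF eq, of "\<lambda>p. ipoly p x"] q root_m by simp
    then have "r = 0" using r f_least deg_m by fastforce
    then have "fract_poly m dvd smult (to_fract c) (fract_poly q)"
      using eq by (metis dvd_triv_left fract_poly_dvd fract_poly_smult add_0_right)
    moreover have "c \<noteq> 0" using m0 by (simp add: c_def)
    ultimately show "m dvd q"
      using content_m by (intro fract_poly_dvdD) (auto dest: dvd_smult_cancel)
  qed
  then show ?thesis using that m0 root_m unfolding is_int_minpoly_def by blast
qed

lemma int_minpoly_monic_exists:
  fixes x :: "'a::{idom, ring_char_0}"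
  assumes "lead_coeff P = 1" "ipoly P x = 0"
  obtains m where "is_int_minpoly x m" "lead_coeff m = 1"
proof -
  have "P \<noteq> 0" using assms(1) by auto
  then obtain m where m: "is_int_minpoly x m" using int_minpoly_exists assms(2) by blast
  then obtain h where "P = m * h" using assms(2) by (auto simp: is_int_minpoly_def)
  then have "lead_coeff m * lead_coeff h = 1" using assms(1) by (simp add: lead_coeff_mult)
  then have unit: "lead_coeff m * lead_coeff m = 1" using zmult_eq_1_iff by blast
  define m' where "m' = smult (lead_coeff m) m"
  have "m = smult (lead_coeff m) m'" using unit by (simp add: m'_def)
  then have "m' dvd m" by (metis dvd_smult dvd_refl)
  then have "is_int_minpoly x m'"
    using m unit unfolding is_int_minpoly_def m'_def by (auto intro: dvd_trans)
  moreover have "lead_coeff m' = 1" using unit by (cases "m = 0") (simp_all add: m'_def)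
  ultimately show ?thesis by (rule that)
qed

text \<open>x is integral over \<int>, so an integer lying in k\<int>[x] lies in k\<int>.\<close>

lemma of_int_eq_mult_ipoly_imp_dvd:
  fixes x :: "'a::{idom, ring_char_0}"
  assumes m: "is_int_minpoly x m" "lead_coeff m = 1"
    and n: "of_int n = of_int k * ipoly A x"
  shows "k dvd n"
proof -
  have m0: "m \<noteq> 0" and root_m: "ipoly m x = 0" and dvd_m: "\<And>q. ipoly q x = 0 \<Longrightarrow> m dvd q"
    using m by (auto simp: is_int_minpoly_def)
  have deg_m: "degree m > 0"
  proof (rule ccontr)
    assume "\<not> degree m > 0"
    then have "m = [:1:]" using m(2) by (metis degree_0_id gr0I)
    then show False using root_m by simp
  qed
  obtain s r where sr: "pseudo_divmod A m = (s, r)" by (cases "pseudo_divmod A m")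
  have eq: "A = m * s + r" and r: "r = 0 \<or> degree r < degree m"
    using pseudo_divmod[OF m0 sr] m(2) by simp_all
  define Q where "Q = smult k r - [:n:]"
  have "ipoly Q x = 0"
    using n arg_cong[OF eq, of "\<lambda>p. ipoly p x"] root_m by (simp add: Q_def)
  moreover have "degree Q < degree m"
    using r deg_m unfolding Q_def
    by (intro degree_diff_less) (auto intro: le_less_trans[OF degree_smult_le])
  ultimately have "Q = 0" using dvd_imp_degree_le[OF dvd_m] by (meson leD)
  then have "coeff Q 0 = 0" by simp
  then have "k * coeff r 0 = n" by (simp add: Q_def)
  then show ?thesis by (metis dvd_triv_left)
qed

section \<open>Galois conjugates of roots of unity\<close>

lemma ipoly_root_of_unity_power_prime:
  fixes \<xi> :: "'a::{idom, ring_char_0}"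
  assumes \<xi>: "\<xi> ^ D = 1" and D: "D > 0" and p: "prime p" "\<not> p dvd D"
    and q: "ipoly q \<xi> = 0"
  shows "ipoly q (\<xi> ^ p) = 0"
proof -
  define P :: "int poly" where "P = [:0, 1:] ^ D - 1"
  have P_eval: "ipoly P z = z ^ D - 1" for z :: 'a by (simp add: P_def)
  have "P = - 1 + [:0, 1:] ^ D" by (simp add: P_def)
  then have "lead_coeff P = 1"
    using D by (simp only:) (subst lead_coeff_add_le, simp_all add: degree_linear_power coeff_linear_power)
  define \<eta> where "\<eta> = \<xi> ^ p"
  have \<eta>: "\<eta> ^ D = 1" unfolding \<eta>_def by (metis \<xi> mult.commute power_mult power_one)
  obtain f where f: "is_int_minpoly \<xi> f" "lead_coeff f = 1"
    using int_minpoly_monic_exists[OF \<open>lead_coeff P = 1\<close>, of \<xi>] \<xi> P_eval by auto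
  obtain g where g: "is_int_minpoly \<eta> g"
    using int_minpoly_monic_exists[OF \<open>lead_coeff P = 1\<close>, of \<eta>] \<eta> P_eval by auto
  \<comment> \<open>Otherwise x^D - 1 = f g h; differentiating at \<xi> and using g(\<xi>)^p \<equiv> g(\<xi>^p) = 0 (mod p)
    puts D^p into p\<int>[\<xi>], whence p divides D.\<close>
  have "ipoly f \<eta> = 0"
  proof (rule ccontr)
    assume f\<eta>: "ipoly f \<eta> \<noteq> 0"
    have "f dvd P" using int_minpoly_dvd[OF f(1)] P_eval \<xi> by simp
    then obtain h1 where h1: "P = f * h1" by (elim dvdE)
    have "ipoly h1 \<eta> = 0" using arg_cong[OF h1, of "\<lambda>p. ipoly p \<eta>"] P_eval \<eta> f\<eta> by simp
    then obtain h where h: "h1 = g * h" using int_minpoly_dvd[OF g] by (metis dvdE)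
    have "of_nat D * \<xi> ^ (D - 1) = ipoly (pderiv P) \<xi>"
      by (simp add: P_def pderiv_diff pderiv_power pderiv_pCons)
    also have "\<dots> = ipoly (pderiv f) \<xi> * ipoly g \<xi> * ipoly h \<xi>"
      using int_minpoly_root[OF f(1)] by (simp add: h1 h ipoly_pderiv_mult_at_root mult.assoc)
    finally have deriv: "of_nat D * \<xi> ^ (D - 1) = ipoly g \<xi> * ipoly (pderiv f * h) \<xi>"
      by simp
    obtain u where u: "g ^ p - pcompose g ([:0, 1:] ^ p) = of_nat p * u"
      using frobenius_int_poly_dvd[OF p(1)] by blast
    have "ipoly g \<xi> ^ p = of_nat p * ipoly u \<xi>"
      using arg_cong[OF u, of "\<lambda>p. ipoly p \<xi>"] int_minpoly_root[OF g] by (simp add: ipoly_pcompose \<eta>_def)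
    have "of_int (int D ^ p) = (of_nat D * \<xi> ^ (D - 1) * \<xi>) ^ p"
      using \<xi> D by (simp add: mult.assoc flip: power_Suc2)
    also have "\<dots> = of_int (int p) * ipoly (u * (pderiv f * h * [:0, 1:]) ^ p) \<xi>"
      unfolding deriv by (simp add: power_mult_distrib \<open>ipoly g \<xi> ^ p = _\<close> mult.assoc)
    finally have "int p dvd int D ^ p" by (rule of_int_eq_mult_ipoly_imp_dvd[OF f])
    then show False using p prime_dvd_power by (metis of_nat_dvd_iff of_nat_power)
  qed
  then show ?thesis using int_minpoly_dvd[OF f(1) q] by (auto simp: \<eta>_def)
qed

lemma ipoly_root_of_unity_power_coprime:
  fixes \<xi> :: "'a::{idom, ring_char_0}"
  assumes "\<xi> ^ D = 1" "coprime k D" "ipoly q \<xi> = 0"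
  shows "ipoly q (\<xi> ^ k) = 0"
  using assms
proof (induction k arbitrary: \<xi> rule: less_induct)
  case (less k)
  show ?case
  proof (cases "k \<le> 1")
    case True
    then consider "k = 0" | "k = 1" by linarith
    then show ?thesis
    proof cases
      case 1
      then have "\<xi> = 1" using less.prems(1,2) by simp
      then show ?thesis using less.prems(3) 1 by simp
    next
      case 2
      then show ?thesis using less.prems(3) by simp
    qed
  next
    case False
    then obtain p k' where p: "prime p" and k': "k = p * k'"
      using prime_factor_nat[of k] by (metis dvdE not_le order_refl)
    have "D > 0" using False less.prems(2) gr0I by fastforce
    have "\<not> p dvd D"
      using less.prems(2) p k' by (metis coprime_common_divisor_nat dvd_triv_left not_prime_1)
    have "ipoly q (\<xi> ^ p) = 0"
      using ipoly_root_of_unity_power_prime[OF less.prems(1) \<open>D > 0\<close> p \<open>\<not> p dvd D\<close> less.prems(3)] .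
    moreover have "(\<xi> ^ p) ^ D = 1" by (metis less.prems(1) mult.commute power_mult power_one)
    moreover have "coprime k' D" using less.prems(2) k' by simp
    moreover have "k' < k"
      unfolding k' by (rule n_less_m_mult_n) (use False k' prime_gt_1_nat[OF p] in \<open>auto intro!: gr0I\<close>)
    ultimately have "ipoly q ((\<xi> ^ p) ^ k') = 0" using less.IH by blast
    then show ?thesis by (simp add: k' power_mult)
  qed
qed

lemma root_of_unity_sum_power_coprime:
  fixes \<xi> :: "'a::{idom, ring_char_0}"
  assumes "\<xi> ^ D = 1" "coprime k D" "(\<Sum>j\<in>J. \<xi> ^ b j) = 0"
  shows "(\<Sum>j\<in>J. \<xi> ^ (k * b j)) = 0"
proof -
  define q :: "int poly" where "q = (\<Sum>j\<in>J. monom 1 (b j))"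
  have "ipoly q \<xi> = 0" using assms(3) by (simp add: q_def)
  then have "ipoly q (\<xi> ^ k) = 0" by (rule ipoly_root_of_unity_power_coprime[OF assms(1,2)])
  then show ?thesis by (simp add: q_def power_mult)
qed

section \<open>Roots of unity in the complex plane\<close>

definition unity_root :: "nat \<Rightarrow> int \<Rightarrow> complex" where
  "unity_root M a = cis (2 * pi * of_int a / of_nat M)"

lemma unity_root_0 [simp]: "unity_root M 0 = 1"
  by (simp add: unity_root_def)

lemma unity_root_add: "unity_root M (a + b) = unity_root M a * unity_root M b"
  by (simp add: unity_root_def cis_mult add_divide_distrib distrib_left)

lemma unity_root_uminus: "unity_root M (- a) = cnj (unity_root M a)"
  by (simp add: unity_root_def cis_cnj)

lemma unity_root_diff: "unity_root M (a - b) = unity_root M a * cnj (unity_root M b)"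
  using unity_root_add[of M a "- b"] by (simp add: unity_root_uminus)

lemma norm_unity_root [simp]: "norm (unity_root M a) = 1"
  by (simp add: unity_root_def)

lemma unity_root_of_nat: "unity_root M (int n) = unity_root M 1 ^ n"
  by (simp add: unity_root_def DeMoivre ac_simps)

lemma unity_root_cong:
  assumes "M > 0" "int M dvd a - b"
  shows "unity_root M a = unity_root M b"
proof -
  obtain t where t: "a = b + int M * t" using assms(2) by (metis dvdE diff_eq_eq add.commute)
  have "2 * pi * of_int (int M * t) / of_nat M = 2 * pi * (of_int t :: real)"
    using assms(1) by simp
  then have root: "unity_root M (int M * t) = 1"
    by (simp only: unity_root_def cis_multiple_2pi Ints_of_int)
  have "unity_root M a = unity_root M b * unity_root M (int M * t)"
    unfolding t by (rule unity_root_add)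
  with root show ?thesis by simp
qed

lemma unity_root_mod: "M > 0 \<Longrightarrow> unity_root M (a mod int M) = unity_root M a"
  by (rule unity_root_cong) (auto intro: dvd_diff_commute[THEN iffD1] dvd_minus_mod)

lemma unity_root_power_order: "M > 0 \<Longrightarrow> unity_root M 1 ^ M = 1"
  using unity_root_cong[of M "int M" 0] by (simp flip: unity_root_of_nat)

lemma unity_root_eq_power: "D > 0 \<Longrightarrow> unity_root D b = unity_root D 1 ^ nat (b mod int D)"
  by (simp add: unity_root_mod flip: unity_root_of_nat)

lemma unity_root_mult_cancel: "T > 0 \<Longrightarrow> unity_root (D * T) (int T * b) = unity_root D b"
  by (simp add: unity_root_def mult.assoc)

lemma unity_root_sum_mult_coprime:
  assumes "D > 0" "coprime k (int D)" "(\<Sum>l\<in>L. unity_root D (b l)) = 0"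
  shows "(\<Sum>l\<in>L. unity_root D (k * b l)) = 0"
proof -
  define \<xi> where "\<xi> = unity_root D 1"
  define k' where "k' = nat (k mod int D)"
  define b' where "b' l = nat (b l mod int D)" for l
  have "coprime (int k') (int D)"
    using assms(1,2) by (simp add: k'_def)
  then have "coprime k' D" by simp
  moreover have "\<xi> ^ D = 1" using assms(1) by (simp add: \<xi>_def unity_root_power_order)
  moreover have "(\<Sum>l\<in>L. \<xi> ^ b' l) = 0"
    using assms(1,3) by (simp add: \<xi>_def b'_def flip: unity_root_eq_power)
  ultimately have "(\<Sum>l\<in>L. \<xi> ^ (k' * b' l)) = 0"
    using root_of_unity_sum_power_coprime by blast
  moreover have "unity_root D (k * b l) = \<xi> ^ (k' * b' l)" for l
  proof -
    have "unity_root D (k * b l) = unity_root D (int (k' * b' l))"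
      using assms(1) by (intro unity_root_cong) (simp_all add: k'_def b'_def mod_eq_dvd_iff [symmetric] mod_mult_eq)
    then show ?thesis unfolding \<xi>_def unity_root_of_nat .
  qed
  ultimately show ?thesis by simp
qed

lemma unity_root_sum_mult_invertible:
  assumes "M > 0" "(\<Sum>l\<in>L. unity_root M (a l)) = 0"
    and "\<forall>l\<in>L. int M dvd (k * k' - 1) * a l"
  shows "(\<Sum>l\<in>L. unity_root M (k * a l)) = 0"
proof -
  \<comment> \<open>Only D = gcd M (kk' - 1) matters: each a l is a multiple of M / D, and k is a unit modulo D.\<close>
  define D where "D = nat (gcd (int M) (k * k' - 1))"
  have "D > 0" using assms(1) by (simp add: D_def)
  have "int D dvd int M" by (simp add: D_def)
  then have "D dvd M" by (simp only: of_nat_dvd_iff)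
  then obtain T where M: "M = D * T" by (elim dvdE)
  then have "T > 0" using assms(1) by (simp add: gr0I)
  define b where "b l = a l div int T" for l
  have b: "a l = int T * b l" if "l \<in> L" for l
  proof -
    have "int M dvd gcd (int M * a l) ((k * k' - 1) * a l)" using assms(3) that by simp
    also have "\<dots> = int D * \<bar>a l\<bar>" by (simp add: D_def gcd_mult_right abs_mult gcd.commute)
    finally have "int D * int T dvd int D * a l" using M by simp
    then show ?thesis using \<open>D > 0\<close> by (simp add: b_def)
  qed
  have "coprime k (k * k' - 1)" by (metis coprime_mult_left_iff coprime_doff_one_right)
  moreover have "int D dvd k * k' - 1" by (simp add: D_def)
  ultimately have "coprime k (int D)" by (metis coprime_divisors dvd_refl)
  have reduce: "unity_root M (c * a l) = unity_root D (c * b l)" if "l \<in> L" for l c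
    using unity_root_mult_cancel[OF \<open>T > 0\<close>, of D "c * b l"] b[OF that]
    by (simp add: M mult.left_commute)
  have "(\<Sum>l\<in>L. unity_root D (b l)) = 0"
    using assms(2) reduce[of _ 1] by simp
  with \<open>coprime k (int D)\<close> have "(\<Sum>l\<in>L. unity_root D (k * b l)) = 0"
    by (rule unity_root_sum_mult_coprime[OF \<open>D > 0\<close>])
  then show ?thesis using reduce by simp
qed

section \<open>Square matrices with unimodular entries\<close>

lemma sum_norm_gram_rows_eq_columns:
  fixes e :: "'a \<Rightarrow> 'b \<Rightarrow> complex"
  shows "(\<Sum>a\<in>A. \<Sum>a'\<in>A. (norm (\<Sum>b\<in>B. e a b * cnj (e a' b)))\<^sup>2)
       = (\<Sum>b\<in>B. \<Sum>b'\<in>B. (norm (\<Sum>a\<in>A. e a b * cnj (e a b')))\<^sup>2)"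
proof -
  define T where "T a a' b b' = e a b * cnj (e a' b) * cnj (e a b') * e a' b'" for a a' b b'
  have "complex_of_real (\<Sum>a\<in>A. \<Sum>a'\<in>A. (norm (\<Sum>b\<in>B. e a b * cnj (e a' b)))\<^sup>2)
      = (\<Sum>a\<in>A. \<Sum>a'\<in>A. \<Sum>b\<in>B. \<Sum>b'\<in>B. T a a' b b')"
    by (simp only: of_real_sum complex_norm_square) (simp add: T_def sum_product cnj_sum mult_ac)
  also have "\<dots> = (\<Sum>b\<in>B. \<Sum>b'\<in>B. \<Sum>a\<in>A. \<Sum>a'\<in>A. T a a' b b')"
    by (subst sum.swap, subst (2) sum.swap, subst (3) sum.swap, subst sum.swap) (rule refl)
  also have "\<dots> = complex_of_real (\<Sum>b\<in>B. \<Sum>b'\<in>B. (norm (\<Sum>a\<in>A. e a b * cnj (e a b')))\<^sup>2)"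
    by (simp only: of_real_sum complex_norm_square) (simp add: T_def sum_product cnj_sum mult_ac)
  finally show ?thesis by (simp only: of_real_eq_iff)
qed

lemma orthogonal_columns_if_orthogonal_rows:
  fixes e :: "'a \<Rightarrow> 'b \<Rightarrow> complex"
  assumes fin: "finite A" "finite B" and card: "card A = card B"
    and unimodular: "\<And>a b. a \<in> A \<Longrightarrow> b \<in> B \<Longrightarrow> norm (e a b) = 1"
    and rows: "\<And>a a'. a \<in> A \<Longrightarrow> a' \<in> A \<Longrightarrow> a \<noteq> a' \<Longrightarrow> (\<Sum>b\<in>B. e a b * cnj (e a' b)) = 0"
    and b: "b \<in> B" "b' \<in> B" "b \<noteq> b'"
  shows "(\<Sum>a\<in>A. e a b * cnj (e a b')) = 0"
proof -
  \<comment> \<open>The row Gram matrix has total squared mass m^3, all on its diagonal; the column Gram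
    matrix has the same mass and the same diagonal, so its off-diagonal entries vanish.\<close>
  define m where "m = real (card A)"
  define G where "G b b' = (norm (\<Sum>a\<in>A. e a b * cnj (e a b')))\<^sup>2" for b b'
  have self: "e a b * cnj (e a b) = 1" if "a \<in> A" "b \<in> B" for a b
    using unimodular[OF that] by (metis complex_norm_square of_real_1 power_one)
  have "(\<Sum>a'\<in>A. (norm (\<Sum>b\<in>B. e a b * cnj (e a' b)))\<^sup>2) = m\<^sup>2" if "a \<in> A" for a
  proof -
    have "(\<Sum>a'\<in>A - {a}. (norm (\<Sum>b\<in>B. e a b * cnj (e a' b)))\<^sup>2) = 0"
      using rows[OF that] by (intro sum.neutral) auto
    then show ?thesis using card self[OF that] by (simp add: sum.remove[OF fin(1) that] m_def)
  qed
  then have "(\<Sum>b\<in>B. \<Sum>b'\<in>B. G b b') = m ^ 3"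
    using sum_norm_gram_rows_eq_columns[where e = e and A = A and B = B] by (simp add: G_def m_def power3_eq_cube power2_eq_square)
  moreover have "(\<Sum>b'\<in>B. G b b') = m\<^sup>2 + (\<Sum>b'\<in>B - {b}. G b b')" if "b \<in> B" for b
    using fin card self[OF _ that] by (simp add: sum.remove[OF fin(2) that] G_def m_def)
  ultimately have "(\<Sum>b\<in>B. \<Sum>b'\<in>B - {b}. G b b') = 0"
    using card by (simp add: sum.distrib m_def power3_eq_cube power2_eq_square)
  then have "(\<Sum>b'\<in>B - {b}. G b b') = 0"
    using fin(2) b(1) by (subst (asm) sum_nonneg_eq_0_iff) (auto intro: sum_nonneg simp: G_def)
  then have "G b b' = 0"
    using fin(2) b by (subst (asm) sum_nonneg_eq_0_iff) (auto simp: G_def)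
  then show ?thesis by (simp add: G_def)
qed

section \<open>Characters of the group\<close>

lemma nth_dvd_expo: "i < length ns \<Longrightarrow> ns!i dvd expo ns"
  unfolding expo_def by (rule dvd_Lcm) simp

lemma pairing_sym: "pairing ns x y = pairing ns y x"
  unfolding pairing_def by (simp add: mult_ac)

lemma mod_diff_self_dvd: "m dvd (a mod m) - (a :: int)"
  using dvd_diff_commute dvd_minus_mod by blast

lemma pairing_linear_cong:
  assumes "\<forall>i<length ns. int (ns!i) dvd u!i - (a * x!i + b * y!i)"
  shows "int (expo ns) dvd pairing ns u z - (a * pairing ns x z + b * pairing ns y z)"
proof -
  let ?M = "int (expo ns)" and ?c = "\<lambda>i. int (expo ns div ns!i)"
  define S where "S v = (\<Sum>i<length ns. ?c i * v!i * z!i)" for v :: "int list"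
  have reduce: "?M dvd pairing ns v z - S v" for v
    unfolding pairing_def S_def by (simp add: mod_eq_dvd_iff [symmetric])
  have "?M dvd ?c i * (u!i - (a * x!i + b * y!i)) * z!i" if "i < length ns" for i
  proof -
    have "?M = ?c i * int (ns!i)"
      using nth_dvd_expo[OF that] by (metis dvd_div_mult_self of_nat_mult)
    then show ?thesis using assms that by (simp add: mult_dvd_mono)
  qed
  then have "?M dvd (\<Sum>i<length ns. ?c i * (u!i - (a * x!i + b * y!i)) * z!i)"
    by (auto intro: dvd_sum)
  also have "(\<Sum>i<length ns. ?c i * (u!i - (a * x!i + b * y!i)) * z!i) = S u - (a * S x + b * S y)"
    by (simp add: S_def sum_subtractf sum.distrib sum_distrib_left algebra_simps)
  finally have "?M dvd S u - (a * S x + b * S y)" .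
  then have "?M dvd (pairing ns u z - S u) + (S u - (a * S x + b * S y))
      - (a * (pairing ns x z - S x) + b * (pairing ns y z - S y))"
    by (rule dvd_diff[OF dvd_add[OF reduce] dvd_add[OF dvd_mult[OF reduce] dvd_mult[OF reduce]]])
  then show ?thesis by (simp add: algebra_simps)
qed

lemma pairing_gadd: "int (expo ns) dvd pairing ns (gadd ns x y) z - (pairing ns x z + pairing ns y z)"
  using pairing_linear_cong[of ns "gadd ns x y" 1 x 1 y z] by (simp add: gadd_def mod_diff_self_dvd)

lemma pairing_gsub: "int (expo ns) dvd pairing ns (gsub ns x y) z - (pairing ns x z - pairing ns y z)"
  using pairing_linear_cong[of ns "gsub ns x y" 1 x "- 1" y z] by (simp add: gsub_def mod_diff_self_dvd)

lemma pairing_gsmul: "int (expo ns) dvd pairing ns (gsmul ns k x) z - k * pairing ns x z"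
  using pairing_linear_cong[of ns "gsmul ns k x" k x 0 x z] by (simp add: gsmul_def mod_diff_self_dvd)

lemma chi_eq_unity_root: "chi ns g x = unity_root (expo ns) (pairing ns x g)"
  by (simp add: chi_def unity_root_def cis_conv_exp mult_ac)

lemma chi_sym: "chi ns g x = chi ns x g"
  by (simp add: chi_eq_unity_root pairing_sym)

lemma chi_gzero [simp]: "chi ns (gzero ns) x = 1"
  by (simp add: chi_eq_unity_root pairing_def gzero_def)

lemma norm_chi [simp]: "norm (chi ns g x) = 1"
  by (simp add: chi_eq_unity_root)

lemma finite_grp: "finite (grp ns)"
proof -
  define A where "A = (\<Union>i<length ns. {0..<int (ns!i)})"
  have "grp ns \<subseteq> {xs. set xs \<subseteq> A \<and> length xs = length ns}"
    by (force simp: grp_def A_def in_set_conv_nth)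
  moreover have "finite A" by (simp add: A_def)
  ultimately show ?thesis by (metis finite_lists_length_eq finite_subset)
qed

lemma gsub_self: "x \<in> grp ns \<Longrightarrow> gsub ns x x = gzero ns"
  unfolding gsub_def gzero_def grp_def by (intro nth_equalityI) auto

lemma gsmul_one: "x \<in> grp ns \<Longrightarrow> gsmul ns 1 x = x"
  unfolding gsmul_def grp_def by (intro nth_equalityI) auto

lemma gsmul_gzero: "gsmul ns k (gzero ns) = gzero ns"
  unfolding gsmul_def gzero_def by (intro nth_equalityI) auto

lemma gadd_left_cancel:
  assumes "y \<in> grp ns" "z \<in> grp ns" "gadd ns x y = gadd ns x z"
  shows "y = z"
proof (rule nth_equalityI)
  show "length y = length z" using assms by (simp add: grp_def)
  fix i assume "i < length y"
  then have i: "i < length ns" using assms by (simp add: grp_def)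
  have "(x!i + y!i) mod int (ns!i) = (x!i + z!i) mod int (ns!i)"
    using arg_cong[OF assms(3), of "\<lambda>v. v ! i"] i by (simp add: gadd_def)
  then have "((x!i + y!i) - x!i) mod int (ns!i) = ((x!i + z!i) - x!i) mod int (ns!i)"
    by (rule mod_diff_cong) simp
  then have "y!i mod int (ns!i) = z!i mod int (ns!i)" by simp
  then show "y!i = z!i" using assms(1,2) i by (simp add: grp_def)
qed

lemma self_in_cyc: "x \<in> grp ns \<Longrightarrow> x \<in> cyc ns x"
  unfolding cyc_def using gsmul_one by (metis (mono_tags, lifting) mem_Collect_eq)

lemma dir_equiv_multiples:
  assumes "w \<in> grp ns" "h \<in> grp ns" "dir_equiv ns w h"
  obtains k k' where "h = gsmul ns k w" "w = gsmul ns k' h"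
  using self_in_cyc[OF assms(1)] self_in_cyc[OF assms(2)] assms(3)
  unfolding dir_equiv_def cyc_def by blast

lemma dir_equiv_gzero: "h \<in> grp ns \<Longrightarrow> dir_equiv ns (gzero ns) h \<Longrightarrow> h = gzero ns"
  using self_in_cyc[of h ns] unfolding dir_equiv_def cyc_def by (auto simp: gsmul_gzero)

locale group_moduli =
  fixes ns :: "nat list"
  assumes moduli_pos: "\<forall>i<length ns. ns!i \<ge> 1"
begin

lemma expo_pos: "expo ns > 0"
proof -
  have "0 \<notin> set ns" using moduli_pos by (auto simp: in_set_conv_nth)
  then show ?thesis unfolding expo_def by (metis Lcm_0_iff List.finite_set gr0I)
qed

lemma gsub_in_grp: "gsub ns x y \<in> grp ns"
  using moduli_pos by (auto simp: gsub_def grp_def)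

lemma chi_gadd: "chi ns (gadd ns x y) z = chi ns x z * chi ns y z"
  using unity_root_cong[OF expo_pos pairing_gadd]
  by (simp add: chi_eq_unity_root pairing_sym unity_root_add)

lemma chi_gsub: "chi ns (gsub ns x y) z = chi ns x z * cnj (chi ns y z)"
  using unity_root_cong[OF expo_pos pairing_gsub]
  by (simp add: chi_eq_unity_root pairing_sym unity_root_diff)

lemma chi_gsmul: "chi ns (gsmul ns k x) z = unity_root (expo ns) (k * pairing ns x z)"
  using unity_root_cong[OF expo_pos pairing_gsmul]
  by (simp add: chi_eq_unity_root pairing_sym)

lemma sum_chi_subgroup:
  assumes H: "is_subgroup ns H"
  shows "(\<Sum>h\<in>H. chi ns h l) = (if \<forall>h\<in>H. chi ns h l = 1 then of_nat (card H) else 0)"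
proof (cases "\<forall>h\<in>H. chi ns h l = 1")
  case False
  then obtain h0 where h0: "h0 \<in> H" "chi ns h0 l \<noteq> 1" by blast
  have H_grp: "H \<subseteq> grp ns" and H_add: "\<And>h. h \<in> H \<Longrightarrow> gadd ns h0 h \<in> H"
    using H h0(1) by (auto simp: is_subgroup_def)
  have "finite H" using H_grp finite_grp by (rule finite_subset)
  have inj: "inj_on (gadd ns h0) H"
    by (rule inj_onI) (use H_grp gadd_left_cancel in blast)
  then have "gadd ns h0 ` H = H"
    using \<open>finite H\<close> H_add by (intro endo_inj_surj) auto
  then have "(\<Sum>h\<in>H. chi ns h l) = (\<Sum>h\<in>H. chi ns (gadd ns h0 h) l)"
    using sum.reindex[OF inj, of "\<lambda>h. chi ns h l"] by simp
  also have "\<dots> = chi ns h0 l * (\<Sum>h\<in>H. chi ns h l)"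
    by (simp add: chi_gadd sum_distrib_left)
  finally have "(1 - chi ns h0 l) * (\<Sum>h\<in>H. chi ns h l) = 0"
    by (simp add: algebra_simps)
  then show ?thesis using h0(2) unfolding if_not_P[OF False] by simp
qed simp

lemma card_subgroup_dvd_if_chi_set_eq_0:
  assumes H: "is_subgroup ns H" and "finite L"
    and vanish: "\<And>h. h \<in> H \<Longrightarrow> h \<noteq> gzero ns \<Longrightarrow> chi_set ns h L = 0"
  shows "card H dvd card L"
proof -
  define L0 where "L0 = {l \<in> L. \<forall>h\<in>H. chi ns h l = 1}"
  have "finite H" using H finite_grp finite_subset by (auto simp: is_subgroup_def)
  have "gzero ns \<in> H" using H by (simp add: is_subgroup_def)
  have "(\<Sum>h\<in>H. chi_set ns h L) = chi_set ns (gzero ns) L"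
    using vanish by (simp add: sum.remove[OF \<open>finite H\<close> \<open>gzero ns \<in> H\<close>] sum.neutral)
  also have "\<dots> = of_nat (card L)" by (simp add: chi_set_def)
  finally have "of_nat (card L) = (\<Sum>l\<in>L. \<Sum>h\<in>H. chi ns h l)"
    unfolding chi_set_def by (simp add: sum.swap[of _ H])
  also have "\<dots> = (\<Sum>l\<in>L. if l \<in> L0 then of_nat (card H) else 0)"
    using sum_chi_subgroup[OF H] by (simp add: L0_def)
  also have "\<dots> = of_nat (card H * card L0)"
    using \<open>finite L\<close> by (simp add: L0_def sum.If_cases Int_def)
  finally show ?thesis by (metis dvd_triv_left of_nat_eq_iff)
qed

lemma chi_set_eq_0_if_dir_equiv:
  assumes "w \<in> grp ns" "h \<in> grp ns" "dir_equiv ns w h" "chi_set ns w L = 0"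
  shows "chi_set ns h L = 0"
proof -
  obtain k k' where h: "h = gsmul ns k w" and w: "w = gsmul ns k' h"
    using dir_equiv_multiples[OF assms(1-3)] .
  define a where "a l = pairing ns w l" for l
  have "int (expo ns) dvd (k * k' - 1) * a l" for l
  proof -
    have "int (expo ns) dvd (a l - k' * pairing ns h l) + k' * (pairing ns h l - k * a l)"
      unfolding a_def using pairing_gsmul[of ns k' h l, folded w] pairing_gsmul[of ns k w l, folded h]
      by (rule dvd_add[OF _ dvd_mult])
    moreover have "(k * k' - 1) * a l
        = - ((a l - k' * pairing ns h l) + k' * (pairing ns h l - k * a l))"
      by (simp add: algebra_simps)
    ultimately show ?thesis by (simp only: dvd_minus_iff)
  qed
  moreover have "(\<Sum>l\<in>L. unity_root (expo ns) (a l)) = 0"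
    using assms(4) by (simp add: chi_set_def chi_eq_unity_root a_def pairing_sym[of ns w])
  ultimately have "(\<Sum>l\<in>L. unity_root (expo ns) (k * a l)) = 0"
    using unity_root_sum_mult_invertible[OF expo_pos] by blast
  then show ?thesis by (simp add: chi_set_def h chi_gsmul a_def)
qed

lemma chi_set_gsub_eq_0_dual:
  assumes "finite S" "finite L" "card L = card S"
    and orth: "\<And>l l'. l \<in> L \<Longrightarrow> l' \<in> L \<Longrightarrow> l \<noteq> l' \<Longrightarrow> chi_set ns (gsub ns l l') S = 0"
    and "s \<in> S" "s' \<in> S" "s \<noteq> s'"
  shows "chi_set ns (gsub ns s s') L = 0"
proof -
  have rows: "(\<Sum>s\<in>S. chi ns l s * cnj (chi ns l' s)) = 0" if "l \<in> L" "l' \<in> L" "l \<noteq> l'" for l l'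
    using orth[OF that] by (simp add: chi_set_def chi_gsub)
  have "(\<Sum>l\<in>L. chi ns l s * cnj (chi ns l s')) = 0"
    by (rule orthogonal_columns_if_orthogonal_rows[where e = "chi ns", OF assms(2,1,3) _ rows assms(5-7)])
      simp
  then show ?thesis by (simp add: chi_set_def chi_gsub chi_sym[of ns s] chi_sym[of ns s'])
qed

end

theorem corollary3p2:
  fixes ns :: "nat list" and S H :: "int list set"
  assumes "\<forall>i<length ns. ns!i \<ge> 1"
    and "S \<subseteq> grp ns"
    and "spectral ns S"
    and "is_subgroup ns H"
    and "\<forall>h\<in>H. h \<noteq> gzero ns \<longrightarrow> (\<exists>w\<in>diffset ns S. dir_equiv ns w h)"
  shows "card H dvd card S"
proof -
  interpret group_moduli ns using assms(1) by unfold_locales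
  obtain L where L: "L \<subseteq> grp ns" "card L = card S"
    and orth: "\<And>l l'. l \<in> L \<Longrightarrow> l' \<in> L \<Longrightarrow> l \<noteq> l' \<Longrightarrow> chi_set ns (gsub ns l l') S = 0"
    using assms(3) unfolding spectral_def by blast
  have fin: "finite S" "finite L" using assms(2) L(1) finite_grp[of ns] finite_subset by auto
  have "chi_set ns h L = 0" if h: "h \<in> H" "h \<noteq> gzero ns" for h
  proof -
    have "h \<in> grp ns" using h(1) assms(4) by (auto simp: is_subgroup_def)
    obtain s s' where s: "s \<in> S" "s' \<in> S" and dir: "dir_equiv ns (gsub ns s s') h"
      using assms(5) h unfolding diffset_def by blast
    have "s \<noteq> s'"
    proof
      assume "s = s'"
      then have "gsub ns s s' = gzero ns" using gsub_self s(1) assms(2) by blast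
      then show False using dir dir_equiv_gzero[OF \<open>h \<in> grp ns\<close>] h(2) by simp
    qed
    then have "chi_set ns (gsub ns s s') L = 0"
      using chi_set_gsub_eq_0_dual[OF fin(1,2) L(2) orth s] by blast
    then show ?thesis
      using chi_set_eq_0_if_dir_equiv[OF gsub_in_grp \<open>h \<in> grp ns\<close> dir] by blast
  qed
  then have "card H dvd card L"
    using card_subgroup_dvd_if_chi_set_eq_0[OF assms(4) fin(2)] by blast
  then show ?thesis using L(2) by simp
qed

end
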